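(* Let ${\sf r}$ be an admissible reflection coefficient and $x\in\mathbb R$. If $Y(\lambda,x)$ and $\widetilde Y(\lambda,x)$ both solve RHP 1, then $\widetilde Y=Y$ or $\widetilde Y=-Y$.
   Context: Fix real $J_1<J_2<J_3$; $\rho=\tfrac12\sqrt{J_3-J_1}$, $k=\sqrt{(J_2-J_1)/(J_3-J_1)}$, $K=K(k)$, $K'=K(\sqrt{1-k^2})$. $w_3(\lambda)=\rho\,\mathrm{cn}(\lambda,k)/\mathrm{sn}(\lambda,k)$; torus $\mathbb T^2=\mathbb C/(4K\mathbb Z+4\mathrm iK'\mathbb Z)$; $\sigma_j$ Pauli matrices; $\Gamma_1=\{\Im\lambda=0\}$, $\Gamma_2=\{\Im\lambda=2K'\}$, $\Omega_+=\{0\le\Im\lambda\le2K',|\Re\lambda|\le2K\}$, $\Omega_-=\{-2K'\le\Im\lambda\le0,|\Re\lambda|\le2K\}$. Admissible reflection coefficient: ${\sf r}\in C^\infty(\Gamma_1\cup\Gamma_2)$ with ${\sf r}(\lambda+2K)=-{\sf r}(\lambda)$, ${\sf r}(\lambda+2\mathrm iK')=-\overline{{\sf r}(\bar\lambda)}$, ${\sf r}(0)=0$, and ${\sf r}^{(n)}(\lambda)=O(\lambda^m)$ as $\lambda\to0$ for all $n,m$. RHP 1: $Y(\lambda,x)$ is a bounded $2\times2$ matrix function analytic on $\mathbb T^2\setminus(\Gamma_1\cup\Gamma_2)$ with boundary values $Y_\pm$ from $\Omega_\pm$ satisfying $Y_+=Y_-G$ on $\Gamma_1\cup\Gamma_2$,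 $G=\begin{pmatrix}1+|{\sf r}|^2&\overline{\sf r}e^{-2\mathrm ixw_3}\\ {\sf r}e^{2\mathrm ixw_3}&1\end{pmatrix}$; $\sigma_3Y(\lambda+2K)\sigma_3=Y(\lambda)$, $\sigma_1Y(\lambda+2\mathrm iK')\sigma_1=Y(\lambda)$; $\det Y\equiv1$. *)

theory Defs
  imports "HOL-Analysis.Analysis"
begin

definition ellF :: "real \<Rightarrow> real \<Rightarrow> real" where
  "ellF k \<phi> = (if 0 \<le> \<phi> then integral {0..\<phi>} (\<lambda>\<theta>. 1 / sqrt (1 - k\<^sup>2 * (sin \<theta>)\<^sup>2))
                else - integral {\<phi>..0} (\<lambda>\<theta>. 1 / sqrt (1 - k\<^sup>2 * (sin \<theta>)\<^sup>2)))"

definition ellK :: "real \<Rightarrow> real" where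
  "ellK k = ellF k (pi / 2)"

definition jam :: "real \<Rightarrow> real \<Rightarrow> real" where
  "jam k u = (THE \<phi>. ellF k \<phi> = u)"

definition rsn :: "real \<Rightarrow> real \<Rightarrow> real" where "rsn k u = sin (jam k u)"
definition rcn :: "real \<Rightarrow> real \<Rightarrow> real" where "rcn k u = cos (jam k u)"
definition rdn :: "real \<Rightarrow> real \<Rightarrow> real" where "rdn k u = sqrt (1 - k\<^sup>2 * (rsn k u)\<^sup>2)"

text \<open>Extension to complex arguments u + i v via the classical addition formulas
  combined with Jacobi's imaginary transformation (complementary modulus k' = sqrt(1-k^2)).\<close>
definition jac_den :: "real \<Rightarrow> complex \<Rightarrow> real" where
  "jac_den k z = (let k' = sqrt (1 - k\<^sup>2); u = Re z; v = Im z in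
     (rcn k' v)\<^sup>2 + k\<^sup>2 * (rsn k u)\<^sup>2 * (rsn k' v)\<^sup>2)"

definition jsn :: "real \<Rightarrow> complex \<Rightarrow> complex" where
  "jsn k z = (let k' = sqrt (1 - k\<^sup>2); u = Re z; v = Im z in
     Complex (rsn k u * rdn k' v) (rcn k u * rdn k u * rsn k' v * rcn k' v) / of_real (jac_den k z))"

definition jcn :: "real \<Rightarrow> complex \<Rightarrow> complex" where
  "jcn k z = (let k' = sqrt (1 - k\<^sup>2); u = Re z; v = Im z in
     Complex (rcn k u * rcn k' v) (- (rsn k u * rdn k u * rsn k' v * rdn k' v)) / of_real (jac_den k z))"

definition rho :: "real \<Rightarrow> real \<Rightarrow> real" where "rho J1 J3 = sqrt (J3 - J1) / 2"
definition kmod :: "real \<Rightarrow> real \<Rightarrow> real \<Rightarrow> real" where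
  "kmod J1 J2 J3 = sqrt ((J2 - J1) / (J3 - J1))"
definition KK :: "real \<Rightarrow> real \<Rightarrow> real \<Rightarrow> real" where
  "KK J1 J2 J3 = ellK (kmod J1 J2 J3)"
definition KKp :: "real \<Rightarrow> real \<Rightarrow> real \<Rightarrow> real" where
  "KKp J1 J2 J3 = ellK (sqrt (1 - (kmod J1 J2 J3)\<^sup>2))"

definition w3 :: "real \<Rightarrow> real \<Rightarrow> real \<Rightarrow> complex \<Rightarrow> complex" where
  "w3 J1 J2 J3 l = of_real (rho J1 J3) * jcn (kmod J1 J2 J3) l / jsn (kmod J1 J2 J3) l"

text \<open>Lift to C of Gamma_1 \<union> Gamma_2 \<subseteq> T^2 = C/(4K Z + 4iK' Z): the lines Im z \<in> 2K' Z.\<close>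
definition Gam :: "real \<Rightarrow> real \<Rightarrow> real \<Rightarrow> complex set" where
  "Gam J1 J2 J3 = {z. \<exists>n::int. Im z = 2 * KKp J1 J2 J3 * of_int n}"

definition vderiv_iter :: "nat \<Rightarrow> (real \<Rightarrow> complex) \<Rightarrow> real \<Rightarrow> complex" where
  "vderiv_iter n f = ((\<lambda>g t. vector_derivative g (at t)) ^^ n) f"

definition smooth_real :: "(real \<Rightarrow> complex) \<Rightarrow> bool" where
  "smooth_real f \<longleftrightarrow> (\<forall>n t. vderiv_iter n f differentiable (at t))"

definition admissible_refl :: "real \<Rightarrow> real \<Rightarrow> real \<Rightarrow> (complex \<Rightarrow> complex) \<Rightarrow> bool" where
  "admissible_refl J1 J2 J3 r \<longleftrightarrow>
     (let K = KK J1 J2 J3; Kp = KKp J1 J2 J3; G = Gam J1 J2 J3 in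
       \<comment> \<open>r is a function on the torus (restricted to Gamma_1 \<union> Gamma_2)\<close>
       (\<forall>z\<in>G. r (z + of_real (4 * K)) = r z \<and> r (z + \<i> * of_real (4 * Kp)) = r z) \<and>
       \<comment> \<open>smooth on Gamma_1 and on Gamma_2\<close>
       smooth_real (\<lambda>t. r (of_real t)) \<and>
       smooth_real (\<lambda>t. r (of_real t + \<i> * of_real (2 * Kp))) \<and>
       \<comment> \<open>symmetries\<close>
       (\<forall>z\<in>G. r (z + of_real (2 * K)) = - r z) \<and>
       (\<forall>z\<in>G. r (z + \<i> * of_real (2 * Kp)) = - cnj (r (cnj z))) \<and>
       r 0 = 0 \<and>
       \<comment> \<open>flatness at 0: all derivatives are O(lambda^m) for every m\<close>
       (\<forall>n m. \<exists>C \<delta>. \<delta> > 0 \<and> (\<forall>t. \<bar>t\<bar> < \<delta> \<longrightarrow>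
            norm (vderiv_iter n (\<lambda>t. r (of_real t)) t) \<le> C * \<bar>t\<bar> ^ m)))"

definition sigma1 :: "complex^2^2" where "sigma1 = vector [vector [0, 1], vector [1, 0]]"
definition sigma3 :: "complex^2^2" where "sigma3 = vector [vector [1, 0], vector [0, -1]]"

definition jumpG :: "real \<Rightarrow> real \<Rightarrow> real \<Rightarrow> (complex \<Rightarrow> complex) \<Rightarrow> real \<Rightarrow> complex \<Rightarrow> complex^2^2" where
  "jumpG J1 J2 J3 r x l =
     (let e = exp (2 * \<i> * of_real x * w3 J1 J2 J3 l) in
       vector [vector [1 + (cmod (r l))\<^sup>2, cnj (r l) * exp (- 2 * \<i> * of_real x * w3 J1 J2 J3 l)],
               vector [r l * e, 1]])"

text \<open>Y is given on C minus the lifted contour, periodic w.r.t. the torus lattice.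
  On a line Im z = 2K'n, the region Omega_+ lies above it for n even and below it for n odd.\<close>
definition RHP1 :: "real \<Rightarrow> real \<Rightarrow> real \<Rightarrow> (complex \<Rightarrow> complex) \<Rightarrow> real \<Rightarrow> (complex \<Rightarrow> complex^2^2) \<Rightarrow> bool" where
  "RHP1 J1 J2 J3 r x Y \<longleftrightarrow>
     (let K = KK J1 J2 J3; Kp = KKp J1 J2 J3; G = Gam J1 J2 J3 in
       (\<forall>i j. (\<lambda>z. Y z $ i $ j) holomorphic_on (- G)) \<and>
       bounded (Y ` (- G)) \<and>
       (\<forall>z. z \<notin> G \<longrightarrow> Y (z + of_real (4 * K)) = Y z \<and> Y (z + \<i> * of_real (4 * Kp)) = Y z) \<and>
       (\<forall>z\<in>G. \<exists>Yp Ym.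
           (\<forall>n::int. Im z = 2 * Kp * of_int n \<longrightarrow>
              (even n \<longrightarrow> (Y \<longlongrightarrow> Yp) (at z within {w. Im w > Im z}) \<and>
                           (Y \<longlongrightarrow> Ym) (at z within {w. Im w < Im z})) \<and>
              (odd n \<longrightarrow> (Y \<longlongrightarrow> Yp) (at z within {w. Im w < Im z}) \<and>
                          (Y \<longlongrightarrow> Ym) (at z within {w. Im w > Im z}))) \<and>
           Yp = Ym ** jumpG J1 J2 J3 r x z) \<and>
       (\<forall>z. z \<notin> G \<longrightarrow> sigma3 ** Y (z + of_real (2 * K)) ** sigma3 = Y z) \<and>
       (\<forall>z. z \<notin> G \<longrightarrow> sigma1 ** Y (z + \<i> * of_real (2 * Kp)) ** sigma1 = Y z) \<and>
       (\<forall>z. z \<notin> G \<longrightarrow> det (Y z) = 1))"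

end

theory Submission
  imports Defs "HOL-Complex_Analysis.Conformal_Mappings"
begin

(* If Y and Yt both solve RHP 1, then H = Yt adj(Y) has no jump across the contour, because the
   jump matrix has determinant one.  So its one-sided boundary values agree, H extends across the
   horizontal lines to an entire function, and being bounded it is a constant M by Liouville's
   theorem: Yt = M Y.  Both solutions obey the symmetries sigma3 Y(z + 2K) sigma3 = Y(z) and
   sigma1 Y(z + 2iK') sigma1 = Y(z), which forces M to commute with sigma1 and sigma3; hence M is
   scalar, and det M = 1 leaves M = I or M = -I. *)

section \<open>Horizontal lines and Liouville's theorem\<close>

lemma isolated_int_multiples:
  fixes c t :: real
  obtains r where "r > 0" "\<And>n::int. \<bar>c * of_int n - t\<bar> < r \<Longrightarrow> c * of_int n = t"
proof (cases "c = 0")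
  case True
  show thesis
    by (rule that[of "if t = 0 then 1 else \<bar>t\<bar>"]) (use True in \<open>auto split: if_splits\<close>)
next
  case False
  define s where "s = t / c"
  have dist_scaled: "\<bar>c * of_int n - t\<bar> = \<bar>c\<bar> * \<bar>of_int n - s\<bar>" for n :: int
    using False by (simp add: s_def abs_mult[symmetric] field_simps)
  obtain r where r: "r > 0" "\<And>n::int. \<bar>of_int n - s\<bar> < r \<Longrightarrow> of_int n = s"
  proof (cases "s = of_int \<lfloor>s\<rfloor>")
    case True
    have "of_int n = s" if "\<bar>of_int n - s\<bar> < 1" for n :: int
    proof -
      have "\<bar>real_of_int n - of_int \<lfloor>s\<rfloor>\<bar> < 1"
        using that True by simp
      then have "n = \<lfloor>s\<rfloor>"
        by linarith
      then show ?thesis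
        using True by simp
    qed
    then show thesis
      by (rule that[OF zero_less_one])
  next
    case False
    then have "of_int \<lfloor>s\<rfloor> < s" "s < of_int \<lfloor>s\<rfloor> + 1"
      by linarith+
    moreover have "n \<le> \<lfloor>s\<rfloor> \<or> \<lfloor>s\<rfloor> + 1 \<le> n" for n :: int
      by linarith
    ultimately show thesis
      by (intro that[of "min (s - of_int \<lfloor>s\<rfloor>) (of_int \<lfloor>s\<rfloor> + 1 - s)"])
        (force simp: abs_less_iff)+
  qed
  show thesis
  proof (rule that[of "\<bar>c\<bar> * r"])
    show "\<bar>c\<bar> * r > 0"
      using False r(1) by simp
    fix n :: int
    assume "\<bar>c * of_int n - t\<bar> < \<bar>c\<bar> * r"
    then have "of_int n = s"
      using False r(2) by (simp add: dist_scaled)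
    then show "c * of_int n = t"
      using False by (simp add: s_def)
  qed
qed

definition horizontal_lines :: "real \<Rightarrow> complex set" where
  "horizontal_lines c = {z. \<exists>n::int. Im z = c * of_int n}"

lemma horizontal_lines_locally_one_line:
  obtains r where "r > 0" "\<And>w. w \<in> horizontal_lines c \<Longrightarrow> dist w p < r \<Longrightarrow> Im w = Im p"
proof -
  obtain r where r: "r > 0" "\<And>n::int. \<bar>c * of_int n - Im p\<bar> < r \<Longrightarrow> c * of_int n = Im p"
    using isolated_int_multiples[of c "Im p"] by metis
  show thesis
  proof (rule that[OF r(1)])
    fix w assume "w \<in> horizontal_lines c" "dist w p < r"
    moreover obtain n :: int where "Im w = c * of_int n"
      using \<open>w \<in> horizontal_lines c\<close> by (auto simp: horizontal_lines_def)
    moreover have "\<bar>Im w - Im p\<bar> \<le> dist w p"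
      by (metis abs_Im_le_cmod dist_norm minus_complex.simps(2))
    ultimately show "Im w = Im p"
      using r(2)[of n] by simp
  qed
qed

lemma horizontal_lines_same_Im:
  "w \<in> horizontal_lines c \<Longrightarrow> Im z = Im w \<Longrightarrow> z \<in> horizontal_lines c"
  by (simp add: horizontal_lines_def)

lemma horizontal_lines_add:
  assumes "w \<in> horizontal_lines c"
  shows "z + w \<in> horizontal_lines c \<longleftrightarrow> z \<in> horizontal_lines c"
proof -
  obtain m :: int where m: "Im w = c * of_int m"
    using assms by (auto simp: horizontal_lines_def)
  have "(\<exists>n::int. Im z + c * of_int m = c * of_int n) \<longleftrightarrow> (\<exists>n::int. Im z = c * of_int n)"
    by (metis (no_types) add_diff_cancel_right' diff_add_cancel of_int_add of_int_diff
        right_diff_distrib distrib_left)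
  then show ?thesis
    by (simp add: horizontal_lines_def m)
qed

lemma closure_Compl_horizontal_lines: "closure (- horizontal_lines c) = UNIV"
proof -
  have "p \<in> closure (- horizontal_lines c)" for p
  proof (unfold closure_approachable, intro allI impI)
    fix e :: real assume "e > 0"
    obtain r where r: "r > 0" "\<And>w. w \<in> horizontal_lines c \<Longrightarrow> dist w p < r \<Longrightarrow> Im w = Im p"
      using horizontal_lines_locally_one_line[of c p] by metis
    define w where "w = p + \<i> * of_real (min e r / 2)"
    have "dist w p = min e r / 2" "Im w \<noteq> Im p"
      using \<open>e > 0\<close> \<open>r > 0\<close> by (simp_all add: w_def dist_norm norm_mult)
    then have "w \<notin> horizontal_lines c" "dist w p < e"
      using r \<open>e > 0\<close> by force+
    then show "\<exists>w \<in> - horizontal_lines c. dist w p < e"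
      by blast
  qed
  then show ?thesis by auto
qed

lemma holomorphic_extension_across_horizontal_lines:
  fixes f :: "complex \<Rightarrow> complex"
  assumes hol: "f holomorphic_on - horizontal_lines c"
    and lim: "\<And>z. z \<in> horizontal_lines c \<Longrightarrow> \<exists>L. (f \<longlongrightarrow> L) (at z within - horizontal_lines c)"
  obtains g where "g holomorphic_on UNIV" "\<And>z. z \<notin> horizontal_lines c \<Longrightarrow> g z = f z"
proof -
  let ?G = "horizontal_lines c"
  obtain L where L: "\<And>z. z \<in> ?G \<Longrightarrow> (f \<longlongrightarrow> L z) (at z within - ?G)"
    using lim by metis
  define g where "g z = (if z \<in> ?G then L z else f z)" for z
  have g_off: "g z = f z" if "z \<notin> ?G" for z
    using that by (simp add: g_def)
  have "(f \<longlongrightarrow> g p) (at p within - ?G)" for p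
  proof (cases "p \<in> ?G")
    case True
    then show ?thesis using L by (simp add: g_def)
  next
    case False
    have "continuous_on (- ?G) f"
      using hol by (rule holomorphic_on_imp_continuous_on)
    then show ?thesis
      using False by (simp add: g_def continuous_on_def)
  qed
  moreover have "\<forall>\<^sub>F w in at p within - ?G. f w = g w" for p
    by (simp add: eventually_at_filter g_off)
  ultimately have "continuous (at p within - ?G) g" for p
    unfolding continuous_within by (metis tendsto_cong)
  then have "continuous_on (closure (- ?G)) g"
    by (force simp: continuous_on_closure continuous_within_eps_delta)
  then have cont: "continuous_on UNIV g"
    by (simp add: closure_Compl_horizontal_lines)
  have "g analytic_on UNIV"
  proof (unfold analytic_on_def, intro ballI)
    fix p
    obtain r where r: "r > 0" "\<And>w. w \<in> ?G \<Longrightarrow> dist w p < r \<Longrightarrow> Im w = Im p"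
      using horizontal_lines_locally_one_line[of c p] by metis
    have off: "g holomorphic_on ball p r \<inter> H" if "H \<subseteq> {w. Im w \<noteq> Im p}" for H
    proof -
      have sub: "ball p r \<inter> H \<subseteq> - ?G"
        using r that by (auto simp: dist_commute)
      then have "f holomorphic_on ball p r \<inter> H"
        by (rule holomorphic_on_subset[OF hol])
      then show ?thesis
        by (rule holomorphic_transform) (use sub g_off in auto)
    qed
    have "g holomorphic_on ball p r"
      by (rule holomorphic_on_paste_across_line[where d = \<i> and k = "Im p"])
        (auto intro!: off continuous_on_subset[OF cont] simp: inner_complex_def)
    then show "\<exists>e>0. g holomorphic_on ball p e"
      using r(1) by blast
  qed
  then show thesis
    by (intro that[of g] analytic_imp_holomorphic g_off)
qed

lemma bounded_holomorphic_off_horizontal_lines_constant: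
  fixes f :: "complex \<Rightarrow> complex"
  assumes "f holomorphic_on - horizontal_lines c"
    and "\<And>z. z \<in> horizontal_lines c \<Longrightarrow> \<exists>L. (f \<longlongrightarrow> L) (at z within - horizontal_lines c)"
    and bounded: "bounded (f ` (- horizontal_lines c))"
  obtains C where "\<And>z. z \<notin> horizontal_lines c \<Longrightarrow> f z = C"
proof -
  let ?G = "horizontal_lines c"
  obtain g where hol: "g holomorphic_on UNIV" and g: "\<And>z. z \<notin> ?G \<Longrightarrow> g z = f z"
    using holomorphic_extension_across_horizontal_lines assms(1,2) by metis
  have "g ` closure (- ?G) \<subseteq> closure (f ` (- ?G))"
    by (rule image_closure_subset)
      (use hol g in \<open>auto simp: closure_Compl_horizontal_lines intro: holomorphic_on_imp_continuous_on closure_subset[THEN subsetD]\<close>)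
  then have "bounded (range g)"
    using bounded by (metis bounded_closure bounded_subset closure_Compl_horizontal_lines)
  then obtain C where "\<And>z. g z = C"
    using Liouville_theorem[OF hol] by (auto simp: constant_on_def)
  then show thesis
    using g that by metis
qed

lemma bounded_holomorphic_matrix_off_horizontal_lines_constant:
  fixes F :: "complex \<Rightarrow> complex^'n^'m"
  assumes hol: "\<And>i j. (\<lambda>z. F z $ i $ j) holomorphic_on - horizontal_lines c"
    and lim: "\<And>z. z \<in> horizontal_lines c \<Longrightarrow> \<exists>L. (F \<longlongrightarrow> L) (at z within - horizontal_lines c)"
    and bounded: "\<And>i j. bounded ((\<lambda>z. F z $ i $ j) ` (- horizontal_lines c))"
  obtains M where "\<And>z. z \<notin> horizontal_lines c \<Longrightarrow> F z = M"
proof -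
  have "\<exists>C. \<forall>z. z \<notin> horizontal_lines c \<longrightarrow> F z $ i $ j = C" for i j
  proof (rule bounded_holomorphic_off_horizontal_lines_constant[OF hol _ bounded])
    show "\<exists>L. ((\<lambda>z. F z $ i $ j) \<longlongrightarrow> L) (at z within - horizontal_lines c)"
      if z: "z \<in> horizontal_lines c" for z
    proof -
      obtain L where "(F \<longlongrightarrow> L) (at z within - horizontal_lines c)"
        using lim[OF z] by blast
      then show ?thesis
        by (blast intro: tendsto_vec_nth[OF tendsto_vec_nth])
    qed
  qed blast
  then obtain C where "\<And>i j z. z \<notin> horizontal_lines c \<Longrightarrow> F z $ i $ j = C i j"
    by metis
  then show thesis
    by (intro that[of "\<chi> i j. C i j"]) (simp add: vec_eq_iff)
qed

section \<open>Two-by-two matrices and the adjugate\<close>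

lemma matrix_2_eq_iff:
  "(A::'a^2^2) = B \<longleftrightarrow> A$1$1 = B$1$1 \<and> A$1$2 = B$1$2 \<and> A$2$1 = B$2$1 \<and> A$2$2 = B$2$2"
  by (auto simp: vec_eq_iff forall_2)

lemma matrix_mult_2_nth: "((A::'a::semiring_1^2^'m) ** (B::'a^'p^2)) $ i $ j = A$i$1 * B$1$j + A$i$2 * B$2$j"
  by (simp add: matrix_matrix_mult_def sum_2)

lemma mat_2_nth [simp]: "(mat k :: 'a::zero^2^2) $ 1 $ 1 = k" "(mat k :: 'a^2^2) $ 1 $ 2 = 0"
  "(mat k :: 'a^2^2) $ 2 $ 1 = 0" "(mat k :: 'a^2^2) $ 2 $ 2 = k"
  by (simp_all add: mat_def)

definition adj2 :: "'a::comm_ring_1^2^2 \<Rightarrow> 'a^2^2" where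
  "adj2 A = vector [vector [A$2$2, - A$1$2], vector [- A$2$1, A$1$1]]"

lemma adj2_nth [simp]: "adj2 A $1$1 = A$2$2" "adj2 A $1$2 = - A$1$2"
  "adj2 A $2$1 = - A$2$1" "adj2 A $2$2 = A$1$1"
  by (simp_all add: adj2_def)

lemma matrix_mult_adj2_right: "A ** adj2 A = mat (det A)"
  by (simp add: matrix_2_eq_iff matrix_mult_2_nth det_2 algebra_simps)

lemma matrix_mult_adj2_left: "adj2 A ** A = mat (det A)"
  by (simp add: matrix_2_eq_iff matrix_mult_2_nth det_2 algebra_simps)

lemma adj2_matrix_mult: "adj2 (A ** B) = adj2 B ** adj2 A"
  by (simp add: matrix_2_eq_iff matrix_mult_2_nth algebra_simps)

lemma matrix_mult_adj2_unimodular_cancel: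
  assumes "det G = 1"
  shows "(A ** G) ** adj2 (B ** G) = A ** adj2 B"
proof -
  have "(A ** G) ** adj2 (B ** G) = A ** (G ** adj2 G) ** adj2 B"
    by (simp add: adj2_matrix_mult matrix_mul_assoc)
  then show ?thesis
    using assms by (simp add: matrix_mult_adj2_right)
qed

lemma matrix_mult_adj2_mult_cancel:
  assumes "det Y = 1"
  shows "(A ** adj2 Y) ** Y = A"
  using assms by (simp flip: matrix_mul_assoc add: matrix_mult_adj2_left)

lemma matrix_mult_right_cancel_unimodular:
  fixes A B Y :: "'a::comm_ring_1^2^2"
  assumes "det Y = 1" "A ** Y = B ** Y"
  shows "A = B"
proof -
  have "X ** Y ** adj2 Y = X" for X :: "'a^2^2"
    using assms(1) by (simp add: matrix_mult_adj2_right flip: matrix_mul_assoc)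
  then show ?thesis
    by (metis assms(2))
qed

lemma matrix_mul_involution_conj:
  fixes S :: "'a::semiring_1^'n^'n"
  assumes "S ** S = mat 1"
  shows "S ** (A ** B) ** S = (S ** A ** S) ** (S ** B ** S)"
proof -
  have "X ** S ** S = X" for X :: "'a^'n^'n"
    using assms by (simp flip: matrix_mul_assoc)
  then show ?thesis
    by (simp add: matrix_mul_assoc)
qed

lemma mat_minus_one_mult: "mat (- 1) ** (A::'a::comm_ring_1^2^2) = - A"
  by (simp add: matrix_2_eq_iff matrix_mult_2_nth)

lemma tendsto_matrix_mult [tendsto_intros]:
  fixes A :: "'b \<Rightarrow> 'a::real_normed_algebra_1^'n^'m" and B :: "'b \<Rightarrow> 'a^'p^'n"
  assumes "(A \<longlongrightarrow> A0) F" "(B \<longlongrightarrow> B0) F"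
  shows "((\<lambda>x. A x ** B x) \<longlongrightarrow> A0 ** B0) F"
  unfolding matrix_matrix_mult_def by (intro tendsto_intros assms)

lemma tendsto_adj2 [tendsto_intros]:
  fixes A :: "'b \<Rightarrow> 'a::{real_normed_algebra_1,comm_ring_1}^2^2"
  assumes "(A \<longlongrightarrow> A0) F"
  shows "((\<lambda>x. adj2 (A x)) \<longlongrightarrow> adj2 A0) F"
proof (intro vec_tendstoI)
  fix i j
  show "((\<lambda>x. adj2 (A x) $ i $ j) \<longlongrightarrow> adj2 A0 $ i $ j) F"
    using exhaust_2[of i] exhaust_2[of j] by (elim disjE; simp; intro tendsto_intros assms)
qed

lemma holomorphic_on_matrix_mult_nth:
  fixes A :: "complex \<Rightarrow> complex^'n^'m" and B :: "complex \<Rightarrow> complex^'p^'n"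
  assumes "\<And>i j. (\<lambda>z. A z $ i $ j) holomorphic_on S" "\<And>i j. (\<lambda>z. B z $ i $ j) holomorphic_on S"
  shows "(\<lambda>z. (A z ** B z) $ i $ j) holomorphic_on S"
  unfolding matrix_matrix_mult_def by (simp add: holomorphic_on_sum holomorphic_on_mult assms)

lemma holomorphic_on_adj2_nth:
  fixes A :: "complex \<Rightarrow> complex^2^2"
  assumes "\<And>i j. (\<lambda>z. A z $ i $ j) holomorphic_on S"
  shows "(\<lambda>z. adj2 (A z) $ i $ j) holomorphic_on S"
  using exhaust_2[of i] exhaust_2[of j] by (elim disjE; simp; intro holomorphic_intros assms)

lemma norm_adj2: "norm (adj2 (A::'a::{real_normed_vector,comm_ring_1}^2^2)) = norm A"
  by (simp add: norm_vec_def L2_set_def sum_2 add_ac)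

lemma norm_matrix_mult_nth_le:
  fixes A :: "'a::real_normed_algebra_1^'n^'m" and B :: "'a^'p^'n"
  shows "norm ((A ** B) $ i $ j) \<le> of_nat CARD('n) * (norm A * norm B)"
proof -
  have entry: "norm (M $ a $ b) \<le> norm M" for M :: "'a^'q^'r" and a b
    by (rule order_trans[OF Finite_Cartesian_Product.norm_nth_le Finite_Cartesian_Product.norm_nth_le])
  have "norm (A$i$k * B$k$j) \<le> norm A * norm B" for k
    by (rule order_trans[OF norm_mult_ineq mult_mono[OF entry entry]]) simp_all
  then have "(\<Sum>k\<in>UNIV. norm (A$i$k * B$k$j)) \<le> of_nat CARD('n) * (norm A * norm B)"
    using sum_bounded_above[of UNIV "\<lambda>k. norm (A$i$k * B$k$j)"] by simp
  then show ?thesis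
    unfolding matrix_matrix_mult_def by (auto intro: order_trans[OF norm_sum])
qed

section \<open>Matrices commuting with the Pauli matrices\<close>

lemma sigma3_nth [simp]: "sigma3$1$1 = 1" "sigma3$1$2 = 0" "sigma3$2$1 = 0" "sigma3$2$2 = -1"
  by (simp_all add: sigma3_def)

lemma sigma1_nth [simp]: "sigma1$1$1 = 0" "sigma1$1$2 = 1" "sigma1$2$1 = 1" "sigma1$2$2 = 0"
  by (simp_all add: sigma1_def)

lemma sigma3_sq: "sigma3 ** sigma3 = mat 1"
  by (simp add: matrix_2_eq_iff matrix_mult_2_nth)

lemma sigma1_sq: "sigma1 ** sigma1 = mat 1"
  by (simp add: matrix_2_eq_iff matrix_mult_2_nth)

lemma pauli_invariant_unimodular:
  fixes M :: "complex^2^2"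
  assumes "sigma3 ** M ** sigma3 = M" "sigma1 ** M ** sigma1 = M" "det M = 1"
  shows "M = mat 1 \<or> M = mat (- 1)"
proof -
  have "(sigma3 ** M ** sigma3)$1$2 = - M$1$2" "(sigma3 ** M ** sigma3)$2$1 = - M$2$1"
    "(sigma1 ** M ** sigma1)$2$2 = M$1$1"
    by (simp_all add: matrix_mult_2_nth)
  then have "M$1$2 = - M$1$2" "M$2$1 = - M$2$1" "M$2$2 = M$1$1"
    using assms(1,2) by metis+
  then have "M$1$2 = 0" "M$2$1 = 0" "M$2$2 = M$1$1"
    by simp_all
  then have "M = mat (M$1$1)" "(M$1$1)\<^sup>2 = 1"
    using assms(3) by (simp_all add: matrix_2_eq_iff det_2 power2_eq_square)
  then show ?thesis
    by (metis power2_eq_1_iff)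
qed

section \<open>Solutions of RHP 1\<close>

lemma Gam_eq_horizontal_lines: "Gam J1 J2 J3 = horizontal_lines (2 * KKp J1 J2 J3)"
  by (simp add: Gam_def horizontal_lines_def)

lemma det_jumpG: "det (jumpG J1 J2 J3 r x l) = 1"
proof -
  let ?w = "w3 J1 J2 J3 l"
  have "exp (- 2 * \<i> * of_real x * ?w) * exp (2 * \<i> * of_real x * ?w) = 1"
    by (simp add: exp_minus field_simps)
  moreover have "cnj (r l) * r l = of_real ((cmod (r l))\<^sup>2)"
    by (metis complex_norm_square mult.commute)
  ultimately show ?thesis
    unfolding det_2 jumpG_def Let_def by (simp add: algebra_simps)
qed

lemma RHP1_holomorphic:
  "RHP1 J1 J2 J3 r x Y \<Longrightarrow> (\<lambda>z. Y z $ i $ j) holomorphic_on - Gam J1 J2 J3"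
  unfolding RHP1_def Let_def by blast

lemma RHP1_bounded: "RHP1 J1 J2 J3 r x Y \<Longrightarrow> bounded (Y ` (- Gam J1 J2 J3))"
  unfolding RHP1_def Let_def by blast

lemma RHP1_det: "RHP1 J1 J2 J3 r x Y \<Longrightarrow> z \<notin> Gam J1 J2 J3 \<Longrightarrow> det (Y z) = 1"
  unfolding RHP1_def Let_def by blast

lemma RHP1_sigma3:
  "RHP1 J1 J2 J3 r x Y \<Longrightarrow> z \<notin> Gam J1 J2 J3 \<Longrightarrow> sigma3 ** Y (z + of_real (2 * KK J1 J2 J3)) ** sigma3 = Y z"
  unfolding RHP1_def Let_def by blast

lemma RHP1_sigma1:
  "RHP1 J1 J2 J3 r x Y \<Longrightarrow> z \<notin> Gam J1 J2 J3 \<Longrightarrow> sigma1 ** Y (z + \<i> * of_real (2 * KKp J1 J2 J3)) ** sigma1 = Y z"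
  unfolding RHP1_def Let_def by blast

lemma RHP1_boundary_values:
  assumes "RHP1 J1 J2 J3 r x Y" "Im z = 2 * KKp J1 J2 J3 * of_int n"
  obtains Yp Ym where
    "(Y \<longlongrightarrow> Yp) (at z within (if even n then {w. Im z < Im w} else {w. Im w < Im z}))"
    "(Y \<longlongrightarrow> Ym) (at z within (if even n then {w. Im w < Im z} else {w. Im z < Im w}))"
    "Yp = Ym ** jumpG J1 J2 J3 r x z"
proof -
  have "z \<in> Gam J1 J2 J3"
    using assms(2) by (auto simp: Gam_def)
  then obtain Yp Ym where "\<forall>n::int. Im z = 2 * KKp J1 J2 J3 * of_int n \<longrightarrow>
              (even n \<longrightarrow> (Y \<longlongrightarrow> Yp) (at z within {w. Im w > Im z}) \<and>
                           (Y \<longlongrightarrow> Ym) (at z within {w. Im w < Im z})) \<and>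
              (odd n \<longrightarrow> (Y \<longlongrightarrow> Yp) (at z within {w. Im w < Im z}) \<and>
                          (Y \<longlongrightarrow> Ym) (at z within {w. Im w > Im z}))"
      and "Yp = Ym ** jumpG J1 J2 J3 r x z"
    using assms(1) unfolding RHP1_def Let_def by blast
  then show thesis
    using that assms(2) by (cases "even n") auto
qed

lemma RHP1_quotient_limit:
  assumes Y: "RHP1 J1 J2 J3 r x Y" and Yt: "RHP1 J1 J2 J3 r x Yt" and z: "z \<in> Gam J1 J2 J3"
  shows "\<exists>L. ((\<lambda>w. Yt w ** adj2 (Y w)) \<longlongrightarrow> L) (at z within - Gam J1 J2 J3)"
proof -
  obtain n :: int where n: "Im z = 2 * KKp J1 J2 J3 * of_int n"
    using z by (auto simp: Gam_def)
  define U where "U = (if even n then {w. Im z < Im w} else {w. Im w < Im z})"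
  define D where "D = (if even n then {w. Im w < Im z} else {w. Im z < Im w})"
  obtain Yp Ym where Yp: "(Y \<longlongrightarrow> Yp) (at z within U)" and Ym: "(Y \<longlongrightarrow> Ym) (at z within D)"
      and jump: "Yp = Ym ** jumpG J1 J2 J3 r x z"
    using RHP1_boundary_values[OF Y n] unfolding U_def D_def by blast
  obtain Ytp Ytm where Ytp: "(Yt \<longlongrightarrow> Ytp) (at z within U)" and Ytm: "(Yt \<longlongrightarrow> Ytm) (at z within D)"
      and jump_t: "Ytp = Ytm ** jumpG J1 J2 J3 r x z"
    using RHP1_boundary_values[OF Yt n] unfolding U_def D_def by blast
  have "((\<lambda>w. Yt w ** adj2 (Y w)) \<longlongrightarrow> Ytp ** adj2 Yp) (at z within U)"
    using Ytp Yp by (intro tendsto_matrix_mult tendsto_adj2)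
  moreover have "((\<lambda>w. Yt w ** adj2 (Y w)) \<longlongrightarrow> Ytm ** adj2 Ym) (at z within D)"
    using Ytm Ym by (intro tendsto_matrix_mult tendsto_adj2)
  moreover have "Ytp ** adj2 Yp = Ytm ** adj2 Ym"
    using jump jump_t by (simp add: matrix_mult_adj2_unimodular_cancel det_jumpG)
  ultimately have "((\<lambda>w. Yt w ** adj2 (Y w)) \<longlongrightarrow> Ytp ** adj2 Yp) (at z within U \<union> D)"
    by (simp add: Lim_Un)
  moreover have "- Gam J1 J2 J3 \<subseteq> U \<union> D"
  proof
    fix w assume "w \<in> - Gam J1 J2 J3"
    then have "Im w \<noteq> Im z"
      using z horizontal_lines_same_Im unfolding Gam_eq_horizontal_lines by blast
    then show "w \<in> U \<union> D"
      by (auto simp: U_def D_def)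
  qed
  ultimately show ?thesis
    by (blast intro: tendsto_within_subset)
qed

lemma RHP1_quotient_constant:
  assumes Y: "RHP1 J1 J2 J3 r x Y" and Yt: "RHP1 J1 J2 J3 r x Yt"
  obtains M where "\<And>z. z \<notin> Gam J1 J2 J3 \<Longrightarrow> Yt z = M ** Y z"
proof -
  let ?G = "Gam J1 J2 J3"
  obtain B where B: "\<And>z. z \<notin> ?G \<Longrightarrow> norm (Y z) \<le> B"
    using RHP1_bounded[OF Y] unfolding bounded_iff by blast
  obtain Bt where Bt: "\<And>z. z \<notin> ?G \<Longrightarrow> norm (Yt z) \<le> Bt"
    using RHP1_bounded[OF Yt] unfolding bounded_iff by blast
  have "norm ((Yt z ** adj2 (Y z)) $ i $ j) \<le> 2 * (Bt * B)" if "z \<notin> ?G" for z i j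
  proof -
    have "norm (Yt z) * norm (Y z) \<le> Bt * B"
      using B[OF that] Bt[OF that] by (intro mult_mono) (auto intro: order_trans[OF norm_ge_zero])
    then show ?thesis
      using norm_matrix_mult_nth_le[of "Yt z" "adj2 (Y z)" i j] by (simp add: norm_adj2)
  qed
  then have bounded: "bounded ((\<lambda>z. (Yt z ** adj2 (Y z)) $ i $ j) ` (- ?G))" for i j
    unfolding bounded_iff by blast
  have hol: "(\<lambda>z. (Yt z ** adj2 (Y z)) $ i $ j) holomorphic_on - ?G" for i j
    by (intro holomorphic_on_matrix_mult_nth holomorphic_on_adj2_nth RHP1_holomorphic[OF Y] RHP1_holomorphic[OF Yt])
  obtain M where M: "\<And>z. z \<notin> ?G \<Longrightarrow> Yt z ** adj2 (Y z) = M"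
    using bounded_holomorphic_matrix_off_horizontal_lines_constant
      [OF hol[unfolded Gam_eq_horizontal_lines]
        RHP1_quotient_limit[OF Y Yt, unfolded Gam_eq_horizontal_lines]
        bounded[unfolded Gam_eq_horizontal_lines]]
    unfolding Gam_eq_horizontal_lines by blast
  show thesis
  proof (rule that)
    fix z assume "z \<notin> ?G"
    then show "Yt z = M ** Y z"
      using M matrix_mult_adj2_mult_cancel[OF RHP1_det[OF Y]] by metis
  qed
qed

lemma RHP1_left_factor_invariant:
  assumes Y: "RHP1 J1 J2 J3 r x Y" and Yt: "RHP1 J1 J2 J3 r x Yt"
    and M: "\<And>z. z \<notin> Gam J1 J2 J3 \<Longrightarrow> Yt z = M ** Y z"
  shows "sigma3 ** M ** sigma3 = M" "sigma1 ** M ** sigma1 = M" "det M = 1"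
proof -
  let ?G = "Gam J1 J2 J3"
  have "- ?G \<noteq> {}"
    using closure_Compl_horizontal_lines[of "2 * KKp J1 J2 J3"]
    unfolding Gam_eq_horizontal_lines by (metis UNIV_not_empty closure_empty)
  then obtain z0 where z0: "z0 \<notin> ?G"
    by blast
  have invariant: "S ** M ** S = M"
    if S: "S ** S = mat 1" and shift: "\<And>z. z \<notin> ?G \<Longrightarrow> z + s \<notin> ?G"
      and sym: "\<And>F z. RHP1 J1 J2 J3 r x F \<Longrightarrow> z \<notin> ?G \<Longrightarrow> S ** F (z + s) ** S = F z" for S s
  proof (rule matrix_mult_right_cancel_unimodular[OF RHP1_det[OF Y z0]])
    have "M ** Y z0 = S ** (M ** Y (z0 + s)) ** S"
      using M sym[OF Yt z0] shift[OF z0] z0 by simp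
    also have "\<dots> = (S ** M ** S) ** Y z0"
      using sym[OF Y z0] by (simp add: matrix_mul_involution_conj[OF S])
    finally show "(S ** M ** S) ** Y z0 = M ** Y z0" ..
  qed
  let ?lines = "horizontal_lines (2 * KKp J1 J2 J3)"
  have "complex_of_real (2 * KK J1 J2 J3) \<in> ?lines" "\<i> * of_real (2 * KKp J1 J2 J3) \<in> ?lines"
    unfolding horizontal_lines_def by (auto intro: exI[of _ 0] exI[of _ 1])
  then have shift3: "z + of_real (2 * KK J1 J2 J3) \<notin> ?G"
    and shift1: "z + \<i> * of_real (2 * KKp J1 J2 J3) \<notin> ?G" if "z \<notin> ?G" for z
    using that by (simp_all only: Gam_eq_horizontal_lines horizontal_lines_add not_False_eq_True)
  show "sigma3 ** M ** sigma3 = M"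
    by (rule invariant[OF sigma3_sq shift3 RHP1_sigma3])
  show "sigma1 ** M ** sigma1 = M"
    by (rule invariant[OF sigma1_sq shift1 RHP1_sigma1])
  show "det M = 1"
    using RHP1_det[OF Y z0] RHP1_det[OF Yt z0] M[OF z0] by (simp add: det_mul)
qed

theorem proposition3p1:
  fixes J1 J2 J3 x :: real and r :: "complex \<Rightarrow> complex" and Y Yt :: "complex \<Rightarrow> complex^2^2"
  assumes "J1 < J2" and "J2 < J3"
    and "admissible_refl J1 J2 J3 r"
    and "RHP1 J1 J2 J3 r x Y"
    and "RHP1 J1 J2 J3 r x Yt"
  shows "(\<forall>z. z \<notin> Gam J1 J2 J3 \<longrightarrow> Yt z = Y z) \<or> (\<forall>z. z \<notin> Gam J1 J2 J3 \<longrightarrow> Yt z = - Y z)"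
proof -
  obtain M where M: "\<And>z. z \<notin> Gam J1 J2 J3 \<Longrightarrow> Yt z = M ** Y z"
    using RHP1_quotient_constant[OF assms(4,5)] by blast
  have "M = mat 1 \<or> M = mat (- 1)"
    using RHP1_left_factor_invariant[OF assms(4,5) M] by (intro pauli_invariant_unimodular)
  then show ?thesis
    using M by (auto simp: mat_minus_one_mult)
qed

end
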